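(* Let $A$ and $B$ be commutative associative unital algebras over $\mathbb{C}$ or $\mathbb{R}$, let $n\ge 0$ be an integer, and let $\mathbf{f}\colon A\to B$ be an $n$-homomorphism. Then for every $a\in A$, $$\operatorname{ber}_{\mathbf{f}}(a)=\psi_n(\mathbf{f},a),$$ where $\operatorname{ber}_{\mathbf{f}}(a)=1+\psi_1(\mathbf{f},a-1)+\psi_2(\mathbf{f},a-1)+\dots+\psi_n(\mathbf{f},a-1)$.
   Context: For a linear map $\mathbf{f}\colon A\to B$, its characteristic function is the formal power series $R(\mathbf{f},a,z)=\exp\bigl(\mathbf{f}(\ln(1+az))\bigr)\in B[[z]]$, where $\ln(1+az)=\sum_{k\ge1}(-1)^{k-1}a^kz^k/k$ and $\mathbf{f}$ is applied coefficientwise; write $R(\mathbf{f},a,z)=1+\psi_1(\mathbf{f},a)z+\psi_2(\mathbf{f},a)z^2+\cdots$. Equivalently, $\psi_1(\mathbf{f},a)=\mathbf{f}(a)$ and $\psi_{k+1}(\mathbf{f},a)=\frac{1}{k+1}\bigl(\mathbf{f}(a)\psi_k(\mathbf{f},a)-\mathbf{f}(a^2)\psi_{k-1}(\mathbf{f},a)+\mathbf{f}(a^3)\psi_{k-2}(\mathbf{f},a)-\cdots\bigr)$, with $\psi_0=1$. A linear map $\mathbf{f}$ is an $n$-homomorphism if $\mathbf{f}(1)=n$ and $R(\mathbf{f},a,z)$ is a polynomial in $z$ of degree at most $n$ for every $a\in A$ (i.e. $\psi_k(\mathbf{f},a)=0$ for all $k>n$ and all $a$). For such $\mathbf{f}$,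 the $\mathbf{f}$-Berezinian is $\operatorname{ber}_{\mathbf{f}}(a)=\exp\mathbf{f}(\ln a):=R(\mathbf{f},a-1,1)=\sum_{k=0}^{n}\psi_k(\mathbf{f},a-1)$. *)

theory Defs
  imports "HOL-Analysis.Analysis"
begin

text \<open>Coefficients psi_k(f,a) of the characteristic function R(f,a,z) = exp f(ln(1+az)),
  given by the Newton-type recursion
  psi_0 = 1,  psi_(k+1) = 1/(k+1) * (f(a) psi_k - f(a^2) psi_(k-1) + ... ).\<close>
fun psi :: "('a::{comm_ring_1,real_algebra_1} \<Rightarrow> 'b::{comm_ring_1,real_algebra_1}) \<Rightarrow> 'a \<Rightarrow> nat \<Rightarrow> 'b" where
  "psi f a 0 = 1"
| "psi f a (Suc k) =
     (1 / real (Suc k)) *\<^sub>R (\<Sum>i\<in>{..k}. (-1) ^ i * f (a ^ (Suc i)) * psi f a (k - i))"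

definition n_homomorphism ::
  "nat \<Rightarrow> ('a::{comm_ring_1,real_algebra_1} \<Rightarrow> 'b::{comm_ring_1,real_algebra_1}) \<Rightarrow> bool" where
  "n_homomorphism n f \<longleftrightarrow> linear f \<and> f 1 = of_nat n \<and> (\<forall>a k. n < k \<longrightarrow> psi f a k = 0)"

definition ber :: "nat \<Rightarrow> ('a::{comm_ring_1,real_algebra_1} \<Rightarrow> 'b::{comm_ring_1,real_algebra_1}) \<Rightarrow> 'a \<Rightarrow> 'b" where
  "ber n f a = (\<Sum>k\<in>{0..n}. psi f (a - 1) k)"

end

theory Submission
  imports Defs "HOL-Computational_Algebra.Polynomial_FPS"
begin

(* Write w = z / (1 + z). Since 1 + (c + 1) z = (1 + z) (1 + c w) and f(1) = n, applying f to the
   logarithms gives R(f, c + 1, z) = (1 + z)^n R(f, c, w). For an n-homomorphism R(f, c, z) is a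
   polynomial of degree at most n, so the right-hand side is the sum of psi_k(f, c) z^k (1 + z)^(n - k),
   and comparing coefficients of z^n gives psi_n(f, c + 1) = psi_0(f, c) + ... + psi_n(f, c);
   take c = a - 1. There are no logarithms in B[[z]], so the identity is proved instead by checking
   that both sides solve G' = f(a / (1 + a z)) G with G(0) = 1, which determines G. *)

unbundle no vec_syntax
unbundle fps_syntax

lemma fps_compose_nth_extend:
  fixes a c :: "'a::comm_ring_1 fps"
  assumes "c $ 0 = 0" and "n \<le> N"
  shows "(a oo c) $ n = (\<Sum>i\<le>N. a $ i * (c ^ i) $ n)"
proof -
  have "(a oo c) $ n = (\<Sum>i\<le>n. a $ i * (c ^ i) $ n)"
    by (simp add: fps_compose_nth atLeast0AtMost)
  also have "\<dots> = (\<Sum>i\<le>N. a $ i * (c ^ i) $ n)"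
    using assms startsby_zero_power_prefix[OF assms(1)]
    by (intro sum.mono_neutral_left) auto
  finally show ?thesis .
qed

lemma fps_compose_mult_distrib_comm_ring:
  fixes a b c :: "'a::comm_ring_1 fps"
  assumes c0: "c $ 0 = 0"
  shows "(a * b) oo c = (a oo c) * (b oo c)"
proof (rule fps_ext)
  fix n
  have vanish: "(c ^ (i + j)) $ n = 0" if "\<not> i + j \<le> n" for i j
    using startsby_zero_power_prefix[OF c0] that by simp
  have "((a oo c) * (b oo c)) $ n
      = (\<Sum>k\<le>n. (\<Sum>i\<le>n. a $ i * (c ^ i) $ k) * (\<Sum>j\<le>n. b $ j * (c ^ j) $ (n - k)))"
    unfolding fps_mult_nth atLeast0AtMost
    by (intro sum.cong refl) (simp add: fps_compose_nth_extend[OF c0, where N = n])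
  also have "\<dots> = (\<Sum>k\<le>n. \<Sum>i\<le>n. \<Sum>j\<le>n. a $ i * b $ j * ((c ^ i) $ k * (c ^ j) $ (n - k)))"
    by (simp add: sum_product mult_ac)
  also have "\<dots> = (\<Sum>i\<le>n. \<Sum>j\<le>n. a $ i * b $ j * (\<Sum>k\<le>n. (c ^ i) $ k * (c ^ j) $ (n - k)))"
    by (subst sum.swap, rule sum.cong[OF refl], subst sum.swap) (simp add: sum_distrib_left)
  also have "\<dots> = (\<Sum>i\<le>n. \<Sum>j\<le>n. a $ i * b $ j * (c ^ (i + j)) $ n)"
    by (simp add: fps_mult_nth power_add atLeast0AtMost)
  also have "\<dots> = (\<Sum>(i, j)\<in>{(i, j). i + j \<le> n}. a $ i * b $ j * (c ^ (i + j)) $ n)"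
    unfolding sum.cartesian_product
    by (rule sum.mono_neutral_right) (auto intro: ccontr simp: vanish)
  also have "\<dots> = ((a * b) oo c) $ n"
    by (simp add: sum.triangle_reindex_eq fps_compose_nth fps_mult_nth atLeast0AtMost
        sum_distrib_left sum_distrib_right ac_simps)
  finally show "((a * b) oo c) $ n = ((a oo c) * (b oo c)) $ n" ..
qed

lemma fps_compose_power_comm_ring:
  fixes a c :: "'a::comm_ring_1 fps"
  assumes "c $ 0 = 0"
  shows "a ^ k oo c = (a oo c) ^ k"
  by (induction k) (simp_all add: fps_compose_mult_distrib_comm_ring[OF assms])

lemma fps_compose_deriv_poly:
  fixes F c :: "'a::comm_ring_1 fps"
  assumes c0: "c $ 0 = 0" and deg: "\<forall>i>N. F $ i = 0"
  shows "fps_deriv (F oo c) = (fps_deriv F oo c) * fps_deriv c"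
proof -
  have monomial: "fps_deriv ((fps_const e * fps_X ^ i) oo c)
      = (fps_deriv (fps_const e * fps_X ^ i) oo c) * fps_deriv c" for e i
    by (simp add: fps_compose_mult_distrib_comm_ring[OF c0] fps_compose_power_comm_ring[OF c0]
        c0 fps_deriv_power' ac_simps flip: fps_const_mult fps_of_nat)
  define S where "S = (\<Sum>i=0..N. fps_const (F $ i) * fps_X ^ i)"
  have "F = S"
    unfolding S_def by (rule fps_poly_sum_fps_X[OF deg])
  moreover have "fps_deriv (S oo c) = (fps_deriv S oo c) * fps_deriv c"
    unfolding S_def by (simp add: fps_compose_sum_distrib fps_deriv_sum monomial sum_distrib_right)
  ultimately show ?thesis
    by simp
qed

lemma mult_left_cancel_of_inverse:
  fixes u :: "'a::comm_monoid_mult"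
  assumes "u * v = 1" and "u * x = u * y"
  shows "x = y"
proof -
  have "x = v * (u * x)"
    using assms(1) by (simp add: mult.assoc[symmetric] mult.commute[of v])
  also have "\<dots> = y"
    using assms by (simp add: mult.assoc[symmetric] mult.commute[of v])
  finally show ?thesis .
qed

definition fps_inverse_linear :: "'a::comm_ring_1 \<Rightarrow> 'a fps" where
  "fps_inverse_linear c = Abs_fps (\<lambda>k. (- c) ^ k)"

lemma fps_inverse_linear_mult: "(1 + fps_const c * fps_X) * fps_inverse_linear c = 1"
proof (rule fps_ext)
  fix n
  show "((1 + fps_const c * fps_X) * fps_inverse_linear c) $ n = 1 $ n"
    by (cases n) (simp_all add: fps_inverse_linear_def algebra_simps)
qed

text \<open>The logarithmic derivative \<open>c / (1 + c z)\<close> of \<open>1 + c z\<close>; its image under \<open>f\<close>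
  is the logarithmic derivative of \<open>R(f, c, z)\<close>.\<close>
definition dlog_linear :: "'a::comm_ring_1 \<Rightarrow> 'a fps" where
  "dlog_linear c = fps_const c * fps_inverse_linear c"

lemma dlog_linear_nth: "dlog_linear c $ i = (- 1) ^ i * c ^ Suc i"
  unfolding dlog_linear_def fps_inverse_linear_def
  by (simp add: power_minus[of c] mult.left_commute)

lemma dlog_linear_mult: "(1 + fps_const c * fps_X) * dlog_linear c = fps_const c"
  using fps_inverse_linear_mult[of c] by (simp add: dlog_linear_def mult.left_commute)

definition fps_X_over_1_plus_X :: "'a::comm_ring_1 fps" where
  "fps_X_over_1_plus_X = fps_X * fps_inverse_linear 1"

lemma fps_X_over_1_plus_X_nth_0 [simp]: "fps_X_over_1_plus_X $ 0 = 0"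
  by (simp add: fps_X_over_1_plus_X_def)

lemma fps_X_over_1_plus_X_mult: "(1 + fps_X) * fps_X_over_1_plus_X = fps_X"
proof -
  have "(1 + fps_X :: 'a fps) * fps_inverse_linear 1 = 1"
    using fps_inverse_linear_mult[of "1::'a"] by simp
  then show ?thesis
    by (simp only: fps_X_over_1_plus_X_def mult.left_commute[of "1 + fps_X"] mult.right_neutral)
qed

lemma fps_X_over_1_plus_X_deriv: "(1 + fps_X) ^ 2 * fps_deriv fps_X_over_1_plus_X = 1"
proof -
  let ?w = "fps_X_over_1_plus_X :: 'a fps"
  have "?w + (1 + fps_X) * fps_deriv ?w = fps_deriv ((1 + fps_X) * ?w)"
    by simp
  also have "\<dots> = 1"
    by (simp add: fps_X_over_1_plus_X_mult)
  finally have "(1 + fps_X) * fps_deriv ?w = 1 - ?w"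
    by (simp add: algebra_simps)
  then have "(1 + fps_X) ^ 2 * fps_deriv ?w = (1 + fps_X) * (1 - ?w)"
    by (simp add: power2_eq_square mult.assoc)
  also have "\<dots> = 1"
    by (simp add: right_diff_distrib fps_X_over_1_plus_X_mult)
  finally show ?thesis .
qed

text \<open>Differentiate the logarithm of \<open>1 + c w = (1 + (c + 1) z) / (1 + z)\<close>,
  where \<open>w = z / (1 + z)\<close>.\<close>
lemma dlog_linear_compose:
  "dlog_linear c oo fps_X_over_1_plus_X = (1 + fps_X) ^ 2 * dlog_linear (c + 1) - (1 + fps_X)"
  (is "?lhs = ?rhs")
proof -
  let ?w = "fps_X_over_1_plus_X :: 'a fps"
  define U where "U = 1 + fps_const c * ?w"
  have U_factor: "(1 + fps_X) * U = 1 + fps_const (c + 1) * fps_X"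
  proof -
    have "(1 + fps_X) * U = 1 + fps_X + fps_const c * ((1 + fps_X) * ?w)"
      by (simp add: U_def algebra_simps)
    also have "\<dots> = 1 + fps_const (c + 1) * fps_X"
      by (simp only: fps_X_over_1_plus_X_mult) (simp add: distrib_right)
    finally show ?thesis .
  qed
  have U_unit: "U * ((1 + fps_X) * fps_inverse_linear (c + 1)) = 1"
  proof -
    have "U * ((1 + fps_X) * fps_inverse_linear (c + 1))
        = ((1 + fps_X) * U) * fps_inverse_linear (c + 1)"
      by (simp only: ac_simps)
    also have "\<dots> = 1"
      by (simp only: U_factor fps_inverse_linear_mult)
    finally show ?thesis .
  qed
  have "U * ?lhs = ((1 + fps_const c * fps_X) * dlog_linear c) oo ?w"
    by (simp add: U_def fps_compose_mult_distrib_comm_ring fps_compose_add_distrib)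
  also have "\<dots> = fps_const c"
    by (simp add: dlog_linear_mult)
  also have "\<dots> = (1 + fps_X) * ((1 + fps_const (c + 1) * fps_X) * dlog_linear (c + 1))
      - (1 + fps_const (c + 1) * fps_X)"
    by (simp only: dlog_linear_mult) (simp add: algebra_simps)
  also have "\<dots> = U * ?rhs"
    unfolding U_factor[symmetric] by (simp add: algebra_simps power2_eq_square)
  finally have "U * ?lhs = U * ?rhs" .
  with U_unit show ?thesis
    by (rule mult_left_cancel_of_inverse)
qed

lemma fps_one_plus_X_power_nth_self: "((1 + fps_X :: 'a::comm_ring_1 fps) ^ m) $ m = 1"
proof -
  have "(1 + fps_X :: 'a fps) ^ m = fps_of_poly ([:1, 1:] ^ m)"
    by (simp add: fps_of_poly_power fps_of_poly_pCons)
  then show ?thesis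
    using coeff_linear_power[of "1::'a" m] by (simp only: fps_of_poly_nth)
qed

lemma fps_one_plus_X_power_deriv:
  "(1 + fps_X) * fps_deriv ((1 + fps_X) ^ n) = of_nat n * (1 + fps_X :: 'a::comm_ring_1 fps) ^ n"
proof (cases n)
  case (Suc m)
  then show ?thesis
    by (simp only: fps_deriv_power') (simp add: ac_simps)
qed simp

lemma one_plus_X_squared_inverse:
  "(1 + fps_X) ^ 2 * fps_inverse_linear 1 ^ 2 = (1 :: 'a::comm_ring_1 fps)"
  using fps_inverse_linear_mult[of "1::'a"] by (simp flip: power_mult_distrib)

text \<open>Substituting \<open>z / (1 + z)\<close> into \<open>F\<close> of degree at most \<open>n\<close> and multiplying by
  \<open>(1 + z)\<^sup>n\<close> gives \<open>\<Sum>k. F\<^sub>k z\<^sup>k (1 + z)\<^sup>n\<^sup>-\<^sup>k\<close>,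
  whose coefficient of \<open>z\<^sup>n\<close> is \<open>F(1)\<close>.\<close>
lemma fps_compose_X_over_1_plus_X_nth:
  fixes F :: "'a::comm_ring_1 fps"
  assumes deg: "\<forall>i>n. F $ i = 0"
  shows "((1 + fps_X) ^ n * (F oo fps_X_over_1_plus_X)) $ n = (\<Sum>k\<le>n. F $ k)"
proof -
  let ?w = "fps_X_over_1_plus_X :: 'a fps"
  have monomial: "((1 + fps_X) ^ n * ?w ^ k) $ n = 1" if "k \<le> n" for k
  proof -
    have "(1 + fps_X) ^ n * ?w ^ k = ((1 + fps_X) * ?w) ^ k * (1 + fps_X) ^ (n - k)"
      using that by (simp add: power_mult_distrib ac_simps flip: power_add)
    also have "\<dots> = fps_X ^ k * (1 + fps_X) ^ (n - k)"
      by (simp only: fps_X_over_1_plus_X_mult)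
    finally show ?thesis
      using that by (simp add: fps_X_power_mult_nth fps_one_plus_X_power_nth_self)
  qed
  define S where "S = (\<Sum>k=0..n. fps_const (F $ k) * fps_X ^ k)"
  have "F = S"
    unfolding S_def by (rule fps_poly_sum_fps_X[OF deg])
  moreover have "S oo ?w = (\<Sum>k=0..n. fps_const (F $ k) * ?w ^ k)"
    unfolding S_def
    by (simp add: fps_compose_sum_distrib fps_compose_mult_distrib_comm_ring fps_compose_power_comm_ring)
  ultimately show ?thesis
    by (simp add: sum_distrib_left fps_sum_nth mult.left_commute[of "(1 + fps_X) ^ n"] monomial
        atLeast0AtMost)
qed

definition fps_map :: "('a \<Rightarrow> 'b) \<Rightarrow> 'a fps \<Rightarrow> 'b fps" where
  "fps_map g F = Abs_fps (\<lambda>n. g (F $ n))"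

lemma fps_map_nth [simp]: "fps_map g F $ n = g (F $ n)"
  by (simp add: fps_map_def)

lemma fps_map_of_real_mult:
  "fps_map of_real (r * s) = (fps_map of_real r * fps_map of_real s :: 'a::real_algebra_1 fps)"
  by (rule fps_ext) (simp add: fps_mult_nth)

lemma fps_map_of_real_power:
  "fps_map of_real (r ^ k) = (fps_map of_real r ^ k :: 'a::real_algebra_1 fps)"
  by (induction k) (simp add: fps_eq_iff, simp add: fps_map_of_real_mult)

lemma fps_map_of_real_one_plus_X:
  "fps_map of_real (1 + fps_X) = (1 + fps_X :: 'a::real_algebra_1 fps)"
  by (rule fps_ext) (simp add: fps_X_def)

lemma fps_map_of_real_X_over_1_plus_X:
  "fps_map of_real fps_X_over_1_plus_X = (fps_X_over_1_plus_X :: 'a::{comm_ring_1,real_algebra_1} fps)"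
  by (rule fps_ext) (simp add: fps_X_over_1_plus_X_def fps_inverse_linear_def)

context
  fixes f :: "'a::real_algebra_1 \<Rightarrow> 'b::real_algebra_1"
  assumes lin: "linear f"
begin

lemma linear_of_real_mult: "f (of_real c * x) = of_real c * f x"
  using linear_scale[OF lin, of c x] by (simp add: scaleR_conv_of_real)

lemma fps_map_diff: "fps_map f (F - G) = fps_map f F - fps_map f G"
  by (rule fps_ext) (simp add: linear_diff[OF lin])

lemma fps_map_of_real_mult_left:
  "fps_map f (fps_map of_real r * F) = fps_map of_real r * fps_map f F"
  by (rule fps_ext) (simp add: fps_mult_nth linear_sum[OF lin] linear_of_real_mult)

lemma fps_map_one: "fps_map f 1 = fps_const (f 1)"
  by (rule fps_ext) (simp add: linear_0[OF lin])

lemma fps_map_compose_of_real: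
  "fps_map f (F oo fps_map of_real r) = fps_map f F oo fps_map of_real r"
  by (rule fps_ext)
     (simp add: fps_compose_nth linear_sum[OF lin] of_real_def linear_scale[OF lin]
       flip: fps_map_of_real_power)

end

lemma fps_map_dlog_linear_compose:
  fixes f :: "'a::{comm_ring_1,real_algebra_1} \<Rightarrow> 'b::{comm_ring_1,real_algebra_1}"
  assumes lin: "linear f"
  shows "fps_map f (dlog_linear c) oo fps_X_over_1_plus_X
    = (1 + fps_X) ^ 2 * fps_map f (dlog_linear (c + 1)) - fps_const (f 1) * (1 + fps_X)"
proof -
  have "fps_map f (dlog_linear c) oo fps_X_over_1_plus_X
      = fps_map f (dlog_linear c oo fps_X_over_1_plus_X)"
    using fps_map_compose_of_real[OF lin, where r = fps_X_over_1_plus_X]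
    by (simp only: fps_map_of_real_X_over_1_plus_X)
  also have "\<dots> = fps_map f (fps_map of_real ((1 + fps_X) ^ 2) * dlog_linear (c + 1)
      - fps_map of_real (1 + fps_X) * 1)"
    by (simp only: dlog_linear_compose fps_map_of_real_power fps_map_of_real_one_plus_X mult_1_right)
  also have "\<dots> = (1 + fps_X) ^ 2 * fps_map f (dlog_linear (c + 1)) - fps_const (f 1) * (1 + fps_X)"
    by (simp only: fps_map_diff[OF lin] fps_map_of_real_mult_left[OF lin] fps_map_one[OF lin])
       (simp add: fps_map_of_real_power fps_map_of_real_one_plus_X mult.commute)
  finally show ?thesis .
qed

lemma fps_deriv_eq_mult_unique:
  fixes F G T :: "'a::{comm_ring_1,real_algebra_1} fps"
  assumes F: "fps_deriv F = T * F" and G: "fps_deriv G = T * G" and "F $ 0 = G $ 0"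
  shows "F = G"
proof (rule fps_ext)
  fix k
  show "F $ k = G $ k"
  proof (induction k rule: less_induct)
    case (less k)
    show ?case
    proof (cases k)
      case 0
      with assms(3) show ?thesis by simp
    next
      case (Suc m)
      have "real (Suc m) *\<^sub>R F $ Suc m = fps_deriv F $ m"
        by (simp add: scaleR_conv_of_real)
      also have "\<dots> = (\<Sum>i=0..m. T $ i * F $ (m - i))"
        by (simp add: F fps_mult_nth)
      also have "\<dots> = (\<Sum>i=0..m. T $ i * G $ (m - i))"
        using less Suc by (intro sum.cong refl) simp
      also have "\<dots> = fps_deriv G $ m"
        by (simp add: G fps_mult_nth)
      also have "\<dots> = real (Suc m) *\<^sub>R G $ Suc m"
        by (simp add: scaleR_conv_of_real)
      finally show ?thesis
        using Suc by simp
    qed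
  qed
qed

definition char_fps ::
  "('a::{comm_ring_1,real_algebra_1} \<Rightarrow> 'b::{comm_ring_1,real_algebra_1}) \<Rightarrow> 'a \<Rightarrow> 'b fps" where
  "char_fps f c = Abs_fps (psi f c)"

lemma char_fps_nth [simp]: "char_fps f c $ k = psi f c k"
  by (simp add: char_fps_def)

lemma char_fps_deriv:
  assumes lin: "linear f"
  shows "fps_deriv (char_fps f c) = fps_map f (dlog_linear c) * char_fps f c"
proof (rule fps_ext)
  fix k
  have sign: "f ((- 1) ^ i * x) = (- 1) ^ i * f x" for i x
    using linear_of_real_mult[OF lin, of "(- 1) ^ i" x] by simp
  have "fps_deriv (char_fps f c) $ k = real (Suc k) *\<^sub>R psi f c (Suc k)"
    by (simp add: scaleR_conv_of_real)
  also have "\<dots> = (\<Sum>i\<le>k. (- 1) ^ i * f (c ^ Suc i) * psi f c (k - i))"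
    by simp
  also have "\<dots> = (fps_map f (dlog_linear c) * char_fps f c) $ k"
    by (simp add: fps_mult_nth dlog_linear_nth sign atLeast0AtMost)
  finally show "fps_deriv (char_fps f c) $ k = (fps_map f (dlog_linear c) * char_fps f c) $ k" .
qed

lemma char_fps_compose_X_over_1_plus_X_deriv:
  fixes f :: "'a::{comm_ring_1,real_algebra_1} \<Rightarrow> 'b::{comm_ring_1,real_algebra_1}" and c :: 'a
  assumes hom: "n_homomorphism n f"
  defines "Q \<equiv> char_fps f c oo fps_X_over_1_plus_X"
  shows "(1 + fps_X) ^ 2 * fps_deriv Q
    = ((1 + fps_X) ^ 2 * fps_map f (dlog_linear (c + 1)) - of_nat n * (1 + fps_X)) * Q"
proof -
  let ?w = "fps_X_over_1_plus_X :: 'b fps"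
  have lin: "linear f" and f1: "f 1 = of_nat n" and deg: "\<forall>i>n. char_fps f c $ i = 0"
    using hom by (auto simp: n_homomorphism_def)
  have "fps_deriv Q = (fps_deriv (char_fps f c) oo ?w) * fps_deriv ?w"
    unfolding Q_def by (rule fps_compose_deriv_poly[OF _ deg]) simp
  also have "\<dots> = (fps_map f (dlog_linear c) oo ?w) * Q * fps_deriv ?w"
    by (simp add: char_fps_deriv[OF lin] fps_compose_mult_distrib_comm_ring Q_def)
  finally have "(1 + fps_X) ^ 2 * fps_deriv Q
      = (fps_map f (dlog_linear c) oo ?w) * Q * ((1 + fps_X) ^ 2 * fps_deriv ?w)"
    by (simp add: ac_simps)
  then show ?thesis
    by (simp add: fps_X_over_1_plus_X_deriv fps_map_dlog_linear_compose[OF lin] f1 fps_of_nat)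
qed

lemma char_fps_shift:
  fixes f :: "'a::{comm_ring_1,real_algebra_1} \<Rightarrow> 'b::{comm_ring_1,real_algebra_1}"
  assumes hom: "n_homomorphism n f"
  shows "char_fps f (c + 1) = (1 + fps_X) ^ n * (char_fps f c oo fps_X_over_1_plus_X)"
proof -
  define Q where "Q = char_fps f c oo fps_X_over_1_plus_X"
  define T where "T = fps_map f (dlog_linear (c + 1))"
  have lin: "linear f"
    using hom by (simp add: n_homomorphism_def)
  have "(1 + fps_X) ^ 2 * fps_deriv ((1 + fps_X) ^ n * Q)
      = (1 + fps_X) * ((1 + fps_X) * fps_deriv ((1 + fps_X) ^ n)) * Q
        + (1 + fps_X) ^ n * ((1 + fps_X) ^ 2 * fps_deriv Q)"
    by (simp add: algebra_simps power2_eq_square)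
  also have "\<dots> = (1 + fps_X) ^ 2 * (T * ((1 + fps_X) ^ n * Q))"
    unfolding fps_one_plus_X_power_deriv Q_def T_def char_fps_compose_X_over_1_plus_X_deriv[OF hom]
    by (simp add: algebra_simps power2_eq_square)
  finally have "fps_deriv ((1 + fps_X) ^ n * Q) = T * ((1 + fps_X) ^ n * Q)"
    by (rule mult_left_cancel_of_inverse[OF one_plus_X_squared_inverse])
  moreover have "char_fps f (c + 1) $ 0 = ((1 + fps_X) ^ n * Q) $ 0"
    by (simp add: Q_def fps_nth_power_0)
  ultimately show ?thesis
    unfolding Q_def T_def by (rule fps_deriv_eq_mult_unique[OF char_fps_deriv[OF lin]])
qed

theorem mainTheorem1:
  fixes f :: "'a::{comm_ring_1,real_algebra_1} \<Rightarrow> 'b::{comm_ring_1,real_algebra_1}"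
    and n :: nat
  assumes "n_homomorphism n f"
  shows "\<forall>a. ber n f a = psi f a n"
proof
  fix a :: 'a
  have deg: "\<forall>k>n. char_fps f (a - 1) $ k = 0"
    using assms by (simp add: n_homomorphism_def)
  have "psi f a n = char_fps f (a - 1 + 1) $ n"
    by simp
  also have "\<dots> = (\<Sum>k\<le>n. psi f (a - 1) k)"
    by (simp only: char_fps_shift[OF assms] fps_compose_X_over_1_plus_X_nth[OF deg] char_fps_nth)
  finally show "ber n f a = psi f a n"
    by (simp add: ber_def atLeast0AtMost)
qed

end
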